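(* Let $G$ be a countable directed graph, let $x,y\in\mathcal{V}(G)$ with $x\neq y$, and let $e_1,\dots,e_n$ be distinct edges with source $x$ and range $y$. If $A\in\mathcal{K}_{x,y}$ satisfies $A=P_yAP_x$ and $A\sim\sum_w a_wL_w$ is its Fourier expansion, then $a_{e_i}=0$ for all $i=1,\dots,n$.
   Context: A countable directed graph $G$ has countable vertex set $\mathcal{V}(G)$, edge set $\mathcal{E}(G)$, range and source maps $r,s$. The free semigroupoid $\mathbb{F}^+(G)$ consists of vertices and finite paths $w=e_k\cdots e_1$ with $s(e_i)=r(e_{i-1})$, $s(w)=s(e_1)$, $r(w)=r(e_k)$. On $\ell^2(\mathbb{F}^+(G))$ with orthonormal basis $\{\xi_w\}$, $L_e\xi_w=\xi_{ew}$ if $s(e)=r(w)$ and $0$ otherwise, $P_v$ is the projection onto $\overline{\operatorname{span}}\{\xi_w:r(w)=v\}$, and $L_w=L_{e_k}\cdots L_{e_1}$ for $w=e_k\cdots e_1$, $L_v=P_v$. $\mathcal{T}_+(G)$ is the norm-closed operator algebra generated by all $L_e$ and $P_v$. The Fourier expansion of $A$ is the formal series $\sum_w a_wL_w$ with $a_w=\langle A\xi_{s(w)},\xi_w\rangle$. $\mathfrak{M}_{G,x}$ is the set of characters $\rho$ of $\mathcal{T}_+(G)$ with $\rho(P_x)=1$. A two-dimensional nest representation is a continuous homomorphism $\pi$ of $\mathcal{T}_+(G)$ onto the algebra of operators on a 2-dimensional Hilbert space leaving a fixed one-dimensional subspace $N$ invariant; with unit vectors $h_2\in N$, $h_1\in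 N^\perp$, $\rho^{(i)}_\pi(A)=\langle\pi(A)h_i,h_i\rangle$. $\operatorname{rep}_{x,y}(\mathcal{T}_+(G))$ is the set of such $\pi$ with $\rho^{(1)}_\pi\in\mathfrak{M}_{G,x}$, $\rho^{(2)}_\pi\in\mathfrak{M}_{G,y}$, and $\mathcal{K}_{x,y}=\bigcap\{\ker\pi:\pi\in\operatorname{rep}_{x,y}(\mathcal{T}_+(G))\}$. *)

theory Defs
  imports "HOL-Analysis.Analysis"
begin

text \<open>A directed graph is given by range and source maps r s :: 'e => 'v.
  Elements of the free semigroupoid: vertices Vtx v, and paths Pth [e_k, ..., e_1]
  (nonempty lists, written left to right as e_k ... e_1) with s(e_i) = r(e_(i-1)).\<close>

datatype ('v, 'e) fsg = Vtx 'v | Pth "'e list"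

definition composable :: "('e \<Rightarrow> 'v) \<Rightarrow> ('e \<Rightarrow> 'v) \<Rightarrow> 'e list \<Rightarrow> bool" where
  "composable r s es \<longleftrightarrow> (\<forall>i. Suc i < length es \<longrightarrow> s (es ! i) = r (es ! Suc i))"

definition is_path :: "('e \<Rightarrow> 'v) \<Rightarrow> ('e \<Rightarrow> 'v) \<Rightarrow> ('v, 'e) fsg \<Rightarrow> bool" where
  "is_path r s w \<longleftrightarrow> (case w of Vtx v \<Rightarrow> True | Pth es \<Rightarrow> es \<noteq> [] \<and> composable r s es)"

fun rng :: "('e \<Rightarrow> 'v) \<Rightarrow> ('v, 'e) fsg \<Rightarrow> 'v" where
  "rng r (Vtx v) = v"
| "rng r (Pth es) = r (hd es)"

fun src :: "('e \<Rightarrow> 'v) \<Rightarrow> ('v, 'e) fsg \<Rightarrow> 'v" where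
  "src s (Vtx v) = v"
| "src s (Pth es) = s (last es)"

type_synonym ('v, 'e) vec = "('v, 'e) fsg \<Rightarrow> complex"
type_synonym ('v, 'e) oper = "('v, 'e) vec \<Rightarrow> ('v, 'e) vec"

definition ell2 :: "('e \<Rightarrow> 'v) \<Rightarrow> ('e \<Rightarrow> 'v) \<Rightarrow> ('v, 'e) vec set" where
  "ell2 r s = {f. (\<forall>w. \<not> is_path r s w \<longrightarrow> f w = 0) \<and> (\<lambda>w. (cmod (f w))\<^sup>2) summable_on UNIV}"

definition l2norm :: "('v, 'e) vec \<Rightarrow> real" where
  "l2norm f = sqrt (infsum (\<lambda>w. (cmod (f w))\<^sup>2) UNIV)"

definition l2inner :: "('v, 'e) vec \<Rightarrow> ('v, 'e) vec \<Rightarrow> complex" where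
  "l2inner f g = infsum (\<lambda>w. f w * cnj (g w)) UNIV"

definition xi :: "('v, 'e) fsg \<Rightarrow> ('v, 'e) vec" where
  "xi w = (\<lambda>u. if u = w then 1 else 0)"

text \<open>An operator is represented by its action on l2; it is normalised to be 0 outside l2.\<close>

definition bounded_op :: "('e \<Rightarrow> 'v) \<Rightarrow> ('e \<Rightarrow> 'v) \<Rightarrow> ('v, 'e) oper \<Rightarrow> bool" where
  "bounded_op r s T \<longleftrightarrow>
     (\<forall>f\<in>ell2 r s. T f \<in> ell2 r s)
   \<and> (\<forall>f\<in>ell2 r s. \<forall>g\<in>ell2 r s. \<forall>a b::complex.
        T (\<lambda>w. a * f w + b * g w) = (\<lambda>w. a * T f w + b * T g w))
   \<and> (\<exists>C. \<forall>f\<in>ell2 r s. l2norm (T f) \<le> C * l2norm f)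
   \<and> (\<forall>f. f \<notin> ell2 r s \<longrightarrow> T f = (\<lambda>_. 0))"

definition opnorm :: "('e \<Rightarrow> 'v) \<Rightarrow> ('e \<Rightarrow> 'v) \<Rightarrow> ('v, 'e) oper \<Rightarrow> real" where
  "opnorm r s T = Sup {l2norm (T f) | f. f \<in> ell2 r s \<and> l2norm f \<le> 1}"

definition op_add :: "('v, 'e) oper \<Rightarrow> ('v, 'e) oper \<Rightarrow> ('v, 'e) oper" where
  "op_add A B = (\<lambda>f w. A f w + B f w)"

definition op_diff :: "('v, 'e) oper \<Rightarrow> ('v, 'e) oper \<Rightarrow> ('v, 'e) oper" where
  "op_diff A B = (\<lambda>f w. A f w - B f w)"

definition op_smult :: "complex \<Rightarrow> ('v, 'e) oper \<Rightarrow> ('v, 'e) oper" where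
  "op_smult c A = (\<lambda>f w. c * A f w)"

text \<open>L_e xi_w = xi_(ew) if s(e) = r(w), else 0.\<close>

definition Lop :: "('e \<Rightarrow> 'v) \<Rightarrow> ('e \<Rightarrow> 'v) \<Rightarrow> 'e \<Rightarrow> ('v, 'e) oper" where
  "Lop r s e f = (if f \<in> ell2 r s then
     (\<lambda>w. case w of Vtx _ \<Rightarrow> 0
        | Pth es \<Rightarrow> (case es of [] \<Rightarrow> 0
            | e' # u \<Rightarrow> if e' \<noteq> e then 0
                       else if u = [] then f (Vtx (s e))
                       else if s e = r (hd u) then f (Pth u) else 0))
     else (\<lambda>_. 0))"

definition Pop :: "('e \<Rightarrow> 'v) \<Rightarrow> ('e \<Rightarrow> 'v) \<Rightarrow> 'v \<Rightarrow> ('v, 'e) oper" where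
  "Pop r s v f = (if f \<in> ell2 r s then (\<lambda>w. if is_path r s w \<and> rng r w = v then f w else 0)
                  else (\<lambda>_. 0))"

inductive_set alg_gen :: "('e \<Rightarrow> 'v) \<Rightarrow> ('e \<Rightarrow> 'v) \<Rightarrow> ('v, 'e) oper set" for r s where
  gen_L: "Lop r s e \<in> alg_gen r s"
| gen_P: "Pop r s v \<in> alg_gen r s"
| gen_add: "A \<in> alg_gen r s \<Longrightarrow> B \<in> alg_gen r s \<Longrightarrow> op_add A B \<in> alg_gen r s"
| gen_smult: "A \<in> alg_gen r s \<Longrightarrow> op_smult c A \<in> alg_gen r s"
| gen_mult: "A \<in> alg_gen r s \<Longrightarrow> B \<in> alg_gen r s \<Longrightarrow> A \<circ> B \<in> alg_gen r s"

definition Tplus :: "('e \<Rightarrow> 'v) \<Rightarrow> ('e \<Rightarrow> 'v) \<Rightarrow> ('v, 'e) oper set" where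
  "Tplus r s = {T. bounded_op r s T \<and>
     (\<forall>\<epsilon>>0. \<exists>S\<in>alg_gen r s. opnorm r s (op_diff T S) < \<epsilon>)}"

definition fcoef :: "('e \<Rightarrow> 'v) \<Rightarrow> ('e \<Rightarrow> 'v) \<Rightarrow> ('v, 'e) oper \<Rightarrow> ('v, 'e) fsg \<Rightarrow> complex" where
  "fcoef r s A w = l2inner (A (xi (Vtx (src s w)))) (xi w)"

definition character :: "('e \<Rightarrow> 'v) \<Rightarrow> ('e \<Rightarrow> 'v) \<Rightarrow> (('v, 'e) oper \<Rightarrow> complex) \<Rightarrow> bool" where
  "character r s \<rho> \<longleftrightarrow>
     (\<forall>A\<in>Tplus r s. \<forall>B\<in>Tplus r s. \<rho> (op_add A B) = \<rho> A + \<rho> B \<and> \<rho> (A \<circ> B) = \<rho> A * \<rho> B)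
   \<and> (\<forall>A\<in>Tplus r s. \<forall>c. \<rho> (op_smult c A) = c * \<rho> A)
   \<and> (\<exists>A\<in>Tplus r s. \<rho> A \<noteq> 0)"

definition MG :: "('e \<Rightarrow> 'v) \<Rightarrow> ('e \<Rightarrow> 'v) \<Rightarrow> 'v \<Rightarrow> (('v, 'e) oper \<Rightarrow> complex) set" where
  "MG r s x = {\<rho>. character r s \<rho> \<and> \<rho> (Pop r s x) = 1}"

text \<open>A two-dimensional nest representation, written in the orthonormal basis (h1, h2)
  with h2 spanning N: the matrix entry M \$ i \$ j is <pi(A) h_j, h_i>. Invariance of
  N = span h2 means entry (1,2) vanishes; pi is onto all such operators.\<close>

definition nest_rep :: "('e \<Rightarrow> 'v) \<Rightarrow> ('e \<Rightarrow> 'v) \<Rightarrow> (('v, 'e) oper \<Rightarrow> complex^2^2) \<Rightarrow> bool" where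
  "nest_rep r s \<pi> \<longleftrightarrow>
     (\<forall>A\<in>Tplus r s. \<forall>B\<in>Tplus r s. \<pi> (op_add A B) = \<pi> A + \<pi> B \<and> \<pi> (A \<circ> B) = \<pi> A ** \<pi> B)
   \<and> (\<forall>A\<in>Tplus r s. \<forall>c. \<pi> (op_smult c A) = (\<chi> i j. c * (\<pi> A $ i $ j)))
   \<and> (\<forall>A\<in>Tplus r s. \<forall>\<epsilon>>0. \<exists>\<delta>>0. \<forall>B\<in>Tplus r s.
        opnorm r s (op_diff B A) < \<delta> \<longrightarrow> norm (\<pi> B - \<pi> A) < \<epsilon>)
   \<and> \<pi> ` Tplus r s = {M. M $ 1 $ 2 = 0}"

definition rep_xy :: "('e \<Rightarrow> 'v) \<Rightarrow> ('e \<Rightarrow> 'v) \<Rightarrow> 'v \<Rightarrow> 'v \<Rightarrow> (('v, 'e) oper \<Rightarrow> complex^2^2) set" where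
  "rep_xy r s x y = {\<pi>. nest_rep r s \<pi> \<and> (\<lambda>A. \<pi> A $ 1 $ 1) \<in> MG r s x \<and> (\<lambda>A. \<pi> A $ 2 $ 2) \<in> MG r s y}"

definition Kxy :: "('e \<Rightarrow> 'v) \<Rightarrow> ('e \<Rightarrow> 'v) \<Rightarrow> 'v \<Rightarrow> 'v \<Rightarrow> ('v, 'e) oper set" where
  "Kxy r s x y = {A \<in> Tplus r s. \<forall>\<pi>\<in>rep_xy r s x y. \<pi> A = 0}"

end

theory Submission
  imports Defs
begin

text \<open>Fix an edge e from x to y. Every generator L_e', P_v, and hence every element T of
  the algebra they generate, acts on the coordinates x, e, y in lower triangular form:
  (Tf)(x) = a f(x), (Tf)(y) = c f(y), (Tf)(e) = b f(x) + c f(e). These three identities are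
  linear in T and continuous in operator norm, so they persist on the closure T_+(G). Hence
  the compression T \<mapsto> [[a, 0], [b, c]] to span {\<xi>_x, \<xi>_e} is multiplicative; for x \<noteq> y it
  is onto the lower triangular matrices and so is a nest representation in rep_{x,y}. Its
  off-diagonal entry is b = \<langle>A\<xi>_x, \<xi>_e\<rangle> = a_e, which must vanish for A \<in> K_{x,y}.\<close>

lemma ell2_zero [simp]: "(\<lambda>_. 0) \<in> ell2 r s"
  by (simp add: ell2_def)

lemma l2norm_zero [simp]: "l2norm (\<lambda>_. 0) = 0"
  by (simp add: l2norm_def)

lemma l2norm_nonneg: "0 \<le> l2norm f"
  unfolding l2norm_def by (simp add: infsum_nonneg)

lemma xi_in_ell2:
  assumes "is_path r s w"
  shows "xi w \<in> ell2 r s"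
proof -
  have "(\<lambda>u. (cmod (xi w u))\<^sup>2) summable_on UNIV"
    by (rule summable_on_cong_neutral[where S="{w}", THEN iffD1]) (auto simp: xi_def)
  then show ?thesis
    using assms by (auto simp: ell2_def xi_def)
qed

lemma is_path_Vtx [simp]: "is_path r s (Vtx v)"
  by (simp add: is_path_def)

lemma is_path_edge [simp]: "is_path r s (Pth [e])"
  by (simp add: is_path_def composable_def)

lemma xi_Vtx_in_ell2 [simp]: "xi (Vtx v) \<in> ell2 r s"
  by (simp add: xi_in_ell2)

lemma l2norm_xi [simp]: "l2norm (xi w) = 1"
proof -
  have "infsum (\<lambda>u. (cmod (xi w u))\<^sup>2) UNIV = infsum (\<lambda>u. (cmod (xi w u))\<^sup>2) {w}"
    by (rule infsum_cong_neutral) (auto simp: xi_def)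
  then show ?thesis by (simp add: l2norm_def xi_def)
qed

lemma norm_le_l2norm:
  assumes "f \<in> ell2 r s"
  shows "cmod (f w) \<le> l2norm f"
proof -
  have "(\<lambda>w. (cmod (f w))\<^sup>2) summable_on UNIV"
    using assms by (simp add: ell2_def)
  then have "infsum (\<lambda>w. (cmod (f w))\<^sup>2) {w} \<le> infsum (\<lambda>w. (cmod (f w))\<^sup>2) UNIV"
    by (intro infsum_mono2) auto
  then show ?thesis
    unfolding l2norm_def by (simp add: real_le_rsqrt)
qed

lemma l2norm_eq_0_iff:
  assumes "f \<in> ell2 r s"
  shows "l2norm f = 0 \<longleftrightarrow> f = (\<lambda>_. 0)"
proof
  assume "l2norm f = 0"
  then show "f = (\<lambda>_. 0)"
    using norm_le_l2norm[OF assms] by (auto simp: fun_eq_iff)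
qed simp

lemma
  assumes "f \<in> ell2 r s"
  shows ell2_cmult: "(\<lambda>w. c * f w) \<in> ell2 r s"
    and l2norm_cmult: "l2norm (\<lambda>w. c * f w) = cmod c * l2norm f"
proof -
  have sum: "(\<lambda>w. (cmod (f w))\<^sup>2) summable_on UNIV"
    using assms by (simp add: ell2_def)
  have sq: "(\<lambda>w. (cmod (c * f w))\<^sup>2) = (\<lambda>w. (cmod c)\<^sup>2 * (cmod (f w))\<^sup>2)"
    by (simp add: norm_mult power_mult_distrib)
  show "(\<lambda>w. c * f w) \<in> ell2 r s"
    using assms sum by (auto simp: ell2_def sq intro: summable_on_cmult_right)
  show "l2norm (\<lambda>w. c * f w) = cmod c * l2norm f"
    unfolding l2norm_def sq infsum_cmult_right[OF sum] by (simp add: real_sqrt_mult)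
qed

lemma
  assumes f: "f \<in> ell2 r s" and g: "g \<in> ell2 r s"
  shows ell2_add: "(\<lambda>w. f w + g w) \<in> ell2 r s"
    and l2norm_add_le: "l2norm (\<lambda>w. f w + g w) \<le> 2 * (l2norm f + l2norm g)"
proof -
  let ?sq = "\<lambda>h w. (cmod (h w))\<^sup>2"
  have sf: "?sq f summable_on UNIV" and sg: "?sq g summable_on UNIV"
    using f g by (simp_all add: ell2_def)
  have pointwise: "?sq (\<lambda>w. f w + g w) w \<le> 2 * ?sq f w + 2 * ?sq g w" for w
  proof -
    have "cmod (f w + g w) \<le> cmod (f w) + cmod (g w)"
      by (rule norm_triangle_ineq)
    then have "(cmod (f w + g w))\<^sup>2 \<le> (cmod (f w) + cmod (g w))\<^sup>2"
      by (simp add: power_mono)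
    then show ?thesis
      by (smt (verit) sum_squares_bound power2_sum)
  qed
  have dominant: "(\<lambda>w. 2 * ?sq f w + 2 * ?sq g w) summable_on UNIV"
    by (intro summable_on_add summable_on_cmult_right sf sg)
  have sfg: "?sq (\<lambda>w. f w + g w) summable_on UNIV"
    by (rule summable_on_comparison_test[OF dominant]) (use pointwise in auto)
  show "(\<lambda>w. f w + g w) \<in> ell2 r s"
    using f g sfg by (auto simp: ell2_def)
  have "infsum (?sq (\<lambda>w. f w + g w)) UNIV \<le> infsum (\<lambda>w. 2 * ?sq f w + 2 * ?sq g w) UNIV"
    by (rule infsum_mono[OF sfg dominant]) (use pointwise in auto)
  also have "\<dots> = 2 * (l2norm f)\<^sup>2 + 2 * (l2norm g)\<^sup>2"
    by (simp add: infsum_add summable_on_cmult_right sf sg infsum_cmult_right l2norm_def infsum_nonneg)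
  finally have "l2norm (\<lambda>w. f w + g w) \<le> sqrt (2 * (l2norm f)\<^sup>2 + 2 * (l2norm g)\<^sup>2)"
    unfolding l2norm_def[of "\<lambda>w. f w + g w"] by simp
  also have "\<dots> \<le> 2 * (l2norm f + l2norm g)"
    using l2norm_nonneg[of f] l2norm_nonneg[of g]
    by (intro real_le_lsqrt) (simp_all add: power2_eq_square algebra_simps)
  finally show "l2norm (\<lambda>w. f w + g w) \<le> 2 * (l2norm f + l2norm g)" .
qed

lemma ell2_lincomb:
  "f \<in> ell2 r s \<Longrightarrow> g \<in> ell2 r s \<Longrightarrow> (\<lambda>w. a * f w + b * g w) \<in> ell2 r s"
  by (intro ell2_add ell2_cmult)

definition extended_paths :: "('e \<Rightarrow> 'v) \<Rightarrow> ('e \<Rightarrow> 'v) \<Rightarrow> 'e \<Rightarrow> ('v, 'e) fsg set" where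
  "extended_paths r s e = {Pth (e # u) | u. u = [] \<or> s e = r (hd u)}"

definition strip_edge :: "('e \<Rightarrow> 'v) \<Rightarrow> 'e \<Rightarrow> ('v, 'e) fsg \<Rightarrow> ('v, 'e) fsg" where
  "strip_edge s e w = (case w of Pth (_ # u) \<Rightarrow> if u = [] then Vtx (s e) else Pth u | _ \<Rightarrow> Vtx (s e))"

lemma Lop_eq:
  "f \<in> ell2 r s \<Longrightarrow>
     Lop r s e f = (\<lambda>w. if w \<in> extended_paths r s e then f (strip_edge s e w) else 0)"
  by (auto simp: fun_eq_iff Lop_def extended_paths_def strip_edge_def split: fsg.splits list.splits)

lemma inj_on_strip_edge: "inj_on (strip_edge s e) (extended_paths r s e)"
  by (auto simp: inj_on_def extended_paths_def strip_edge_def split: if_splits)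

lemma composable_Cons:
  assumes "composable r s u" "u \<noteq> []" "s e = r (hd u)"
  shows "composable r s (e # u)"
  unfolding composable_def
proof (intro allI impI)
  fix i assume "Suc i < length (e # u)"
  then show "s ((e # u) ! i) = r ((e # u) ! Suc i)"
    using assms by (cases i) (auto simp: composable_def hd_conv_nth)
qed

lemma is_path_Lop_support:
  assumes f: "f \<in> ell2 r s" and nz: "Lop r s e f w \<noteq> 0"
  shows "is_path r s w"
proof -
  obtain u where w: "w = Pth (e # u)" and u: "u = [] \<or> s e = r (hd u)"
    and fw: "f (strip_edge s e w) \<noteq> 0"
    using nz by (auto simp: Lop_eq[OF f] extended_paths_def split: if_splits)
  show ?thesis
  proof (cases "u = []")
    case True
    then show ?thesis using w by (simp add: is_path_def composable_def)
  next
    case False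
    then have "is_path r s (Pth u)"
      using fw f w by (auto simp: strip_edge_def ell2_def)
    then show ?thesis
      using False u w by (auto simp: is_path_def intro: composable_Cons)
  qed
qed

lemma
  assumes f: "f \<in> ell2 r s"
  shows Lop_in_ell2: "Lop r s e f \<in> ell2 r s"
    and l2norm_Lop_le: "l2norm (Lop r s e f) \<le> l2norm f"
proof -
  let ?W = "extended_paths r s e" and ?p = "strip_edge s e"
  let ?sq = "\<lambda>w. (cmod (f w))\<^sup>2" and ?h = "\<lambda>w. (cmod (Lop r s e f w))\<^sup>2"
  have sum: "?sq summable_on UNIV"
    using f by (simp add: ell2_def)
  have sum_image: "?sq summable_on (?p ` ?W)"
    by (rule summable_on_subset_banach[OF sum]) simp
  have h_eq: "?h = (\<lambda>w. if w \<in> ?W then (?sq \<circ> ?p) w else 0)"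
    by (simp add: Lop_eq[OF f] fun_eq_iff)
  have sum_W: "(?sq \<circ> ?p) summable_on ?W"
    using sum_image by (simp add: summable_on_reindex[OF inj_on_strip_edge, symmetric])
  have sum_h: "?h summable_on UNIV"
    unfolding h_eq
    by (rule summable_on_cong_neutral[where S="?W" and f="?sq \<circ> ?p", THEN iffD1])
       (use sum_W in simp_all)
  show "Lop r s e f \<in> ell2 r s"
    using sum_h is_path_Lop_support[OF f] by (auto simp: ell2_def)
  have "infsum ?h UNIV = infsum (?sq \<circ> ?p) ?W"
    unfolding h_eq by (rule infsum_cong_neutral) auto
  also have "\<dots> = infsum ?sq (?p ` ?W)"
    by (rule infsum_reindex[OF inj_on_strip_edge, symmetric])
  also have "\<dots> \<le> infsum ?sq UNIV"
    by (rule infsum_mono2[OF sum_image sum]) auto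
  finally show "l2norm (Lop r s e f) \<le> l2norm f"
    unfolding l2norm_def by simp
qed

lemma
  assumes f: "f \<in> ell2 r s"
  shows Pop_in_ell2: "Pop r s v f \<in> ell2 r s"
    and l2norm_Pop_le: "l2norm (Pop r s v f) \<le> l2norm f"
proof -
  let ?sq = "\<lambda>w. (cmod (f w))\<^sup>2" and ?h = "\<lambda>w. (cmod (Pop r s v f w))\<^sup>2"
  have sum: "?sq summable_on UNIV"
    using f by (simp add: ell2_def)
  have le: "?h w \<le> ?sq w" for w
    using f by (auto simp: Pop_def)
  have sum_h: "?h summable_on UNIV"
    by (rule summable_on_comparison_test[OF sum le]) simp
  show "Pop r s v f \<in> ell2 r s"
    using sum_h f by (auto simp: ell2_def Pop_def)
  have "infsum ?h UNIV \<le> infsum ?sq UNIV"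
    by (rule infsum_mono[OF sum_h sum le])
  then show "l2norm (Pop r s v f) \<le> l2norm f"
    unfolding l2norm_def by simp
qed

lemma bounded_op_Lop: "bounded_op r s (Lop r s e)"
  unfolding bounded_op_def
proof (intro conjI ballI allI impI)
  fix f g and a b :: complex
  assume "f \<in> ell2 r s" "g \<in> ell2 r s"
  then show "Lop r s e (\<lambda>w. a * f w + b * g w) = (\<lambda>w. a * Lop r s e f w + b * Lop r s e g w)"
    by (simp add: Lop_eq ell2_lincomb fun_eq_iff)
next
  show "\<exists>C. \<forall>f\<in>ell2 r s. l2norm (Lop r s e f) \<le> C * l2norm f"
    by (intro exI[of _ 1]) (simp add: l2norm_Lop_le)
qed (erule Lop_in_ell2, simp add: Lop_def)

lemma bounded_op_Pop: "bounded_op r s (Pop r s v)"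
  unfolding bounded_op_def
proof (intro conjI ballI allI impI)
  fix f g and a b :: complex
  assume "f \<in> ell2 r s" "g \<in> ell2 r s"
  then show "Pop r s v (\<lambda>w. a * f w + b * g w) = (\<lambda>w. a * Pop r s v f w + b * Pop r s v g w)"
    by (simp add: Pop_def ell2_lincomb fun_eq_iff)
next
  show "\<exists>C. \<forall>f\<in>ell2 r s. l2norm (Pop r s v f) \<le> C * l2norm f"
    by (intro exI[of _ 1]) (simp add: l2norm_Pop_le)
qed (erule Pop_in_ell2, simp add: Pop_def)

lemma bounded_op_in_ell2: "bounded_op r s A \<Longrightarrow> f \<in> ell2 r s \<Longrightarrow> A f \<in> ell2 r s"
  by (simp add: bounded_op_def)

lemma bounded_op_linear:
  "bounded_op r s A \<Longrightarrow> f \<in> ell2 r s \<Longrightarrow> g \<in> ell2 r s \<Longrightarrow>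
     A (\<lambda>w. a * f w + b * g w) = (\<lambda>w. a * A f w + b * A g w)"
  by (simp add: bounded_op_def)

lemma bounded_op_outside: "bounded_op r s A \<Longrightarrow> f \<notin> ell2 r s \<Longrightarrow> A f = (\<lambda>_. 0)"
  by (simp add: bounded_op_def)

lemma bounded_op_zero: "bounded_op r s A \<Longrightarrow> A (\<lambda>_. 0) = (\<lambda>_. 0)"
  using bounded_op_linear[of r s A "\<lambda>_. 0" "\<lambda>_. 0" 0 0] by simp

lemma bounded_op_nonneg_bound:
  assumes "bounded_op r s A"
  obtains C where "C \<ge> 0" "\<And>f. f \<in> ell2 r s \<Longrightarrow> l2norm (A f) \<le> C * l2norm f"
proof -
  obtain C where C: "\<forall>f\<in>ell2 r s. l2norm (A f) \<le> C * l2norm f"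
    using assms by (auto simp: bounded_op_def)
  show ?thesis
  proof (rule that[of "max C 0"])
    fix f assume "f \<in> ell2 r s"
    then have "l2norm (A f) \<le> C * l2norm f"
      using C by blast
    also have "\<dots> \<le> max C 0 * l2norm f"
      by (intro mult_right_mono) (simp_all add: l2norm_nonneg)
    finally show "l2norm (A f) \<le> max C 0 * l2norm f" .
  qed simp
qed

lemma bounded_op_add:
  assumes A: "bounded_op r s A" and B: "bounded_op r s B"
  shows "bounded_op r s (op_add A B)"
  unfolding bounded_op_def
proof (intro conjI ballI allI impI)
  fix f assume "f \<in> ell2 r s"
  then show "op_add A B f \<in> ell2 r s"
    unfolding op_add_def by (intro ell2_add bounded_op_in_ell2[OF A] bounded_op_in_ell2[OF B])
next
  fix f g and a b :: complex
  assume "f \<in> ell2 r s" "g \<in> ell2 r s"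
  then show "op_add A B (\<lambda>w. a * f w + b * g w) = (\<lambda>w. a * op_add A B f w + b * op_add A B g w)"
    by (simp add: op_add_def bounded_op_linear[OF A] bounded_op_linear[OF B] algebra_simps)
next
  obtain CA where CA: "\<And>f. f \<in> ell2 r s \<Longrightarrow> l2norm (A f) \<le> CA * l2norm f"
    using bounded_op_nonneg_bound[OF A] by blast
  obtain CB where CB: "\<And>f. f \<in> ell2 r s \<Longrightarrow> l2norm (B f) \<le> CB * l2norm f"
    using bounded_op_nonneg_bound[OF B] by blast
  have "l2norm (op_add A B f) \<le> 2 * (CA + CB) * l2norm f" if f: "f \<in> ell2 r s" for f
  proof -
    have "l2norm (op_add A B f) \<le> 2 * (l2norm (A f) + l2norm (B f))"
      unfolding op_add_def using f
      by (intro l2norm_add_le[where r=r and s=s] bounded_op_in_ell2[OF A] bounded_op_in_ell2[OF B])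
    also have "\<dots> \<le> 2 * (CA * l2norm f + CB * l2norm f)"
      using CA[OF f] CB[OF f] by simp
    finally show ?thesis
      by (simp add: algebra_simps)
  qed
  then show "\<exists>C. \<forall>f\<in>ell2 r s. l2norm (op_add A B f) \<le> C * l2norm f"
    by blast
next
  fix f assume "f \<notin> ell2 r s"
  then show "op_add A B f = (\<lambda>_. 0)"
    using A B by (simp add: op_add_def bounded_op_outside)
qed

lemma bounded_op_smult:
  assumes A: "bounded_op r s A"
  shows "bounded_op r s (op_smult c A)"
  unfolding bounded_op_def
proof (intro conjI ballI allI impI)
  fix f assume "f \<in> ell2 r s"
  then show "op_smult c A f \<in> ell2 r s"
    unfolding op_smult_def by (intro ell2_cmult bounded_op_in_ell2[OF A])
next
  fix f g and a b :: complex
  assume "f \<in> ell2 r s" "g \<in> ell2 r s"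
  then show "op_smult c A (\<lambda>w. a * f w + b * g w) = (\<lambda>w. a * op_smult c A f w + b * op_smult c A g w)"
    by (simp add: op_smult_def bounded_op_linear[OF A] algebra_simps)
next
  obtain CA where "CA \<ge> 0" and CA: "\<And>f. f \<in> ell2 r s \<Longrightarrow> l2norm (A f) \<le> CA * l2norm f"
    using bounded_op_nonneg_bound[OF A] by blast
  have "l2norm (op_smult c A f) \<le> cmod c * CA * l2norm f" if f: "f \<in> ell2 r s" for f
  proof -
    have "l2norm (op_smult c A f) = cmod c * l2norm (A f)"
      unfolding op_smult_def by (intro l2norm_cmult[where r=r and s=s] bounded_op_in_ell2[OF A f])
    also have "\<dots> \<le> cmod c * (CA * l2norm f)"
      using CA[OF f] by (simp add: mult_left_mono)
    finally show ?thesis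
      by (simp add: algebra_simps)
  qed
  then show "\<exists>C. \<forall>f\<in>ell2 r s. l2norm (op_smult c A f) \<le> C * l2norm f"
    by blast
next
  fix f assume "f \<notin> ell2 r s"
  then show "op_smult c A f = (\<lambda>_. 0)"
    using A by (simp add: op_smult_def bounded_op_outside)
qed

lemma bounded_op_comp:
  assumes A: "bounded_op r s A" and B: "bounded_op r s B"
  shows "bounded_op r s (A \<circ> B)"
  unfolding bounded_op_def
proof (intro conjI ballI allI impI)
  fix f assume "f \<in> ell2 r s"
  then show "(A \<circ> B) f \<in> ell2 r s"
    by (simp add: bounded_op_in_ell2[OF A] bounded_op_in_ell2[OF B])
next
  fix f g and a b :: complex
  assume f: "f \<in> ell2 r s" and g: "g \<in> ell2 r s"
  show "(A \<circ> B) (\<lambda>w. a * f w + b * g w) = (\<lambda>w. a * (A \<circ> B) f w + b * (A \<circ> B) g w)"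
    using bounded_op_linear[OF A bounded_op_in_ell2[OF B f] bounded_op_in_ell2[OF B g]]
    by (simp add: bounded_op_linear[OF B f g])
next
  obtain CA where "CA \<ge> 0" and CA: "\<And>f. f \<in> ell2 r s \<Longrightarrow> l2norm (A f) \<le> CA * l2norm f"
    using bounded_op_nonneg_bound[OF A] by blast
  obtain CB where CB: "\<And>f. f \<in> ell2 r s \<Longrightarrow> l2norm (B f) \<le> CB * l2norm f"
    using bounded_op_nonneg_bound[OF B] by blast
  have "l2norm ((A \<circ> B) f) \<le> CA * CB * l2norm f" if f: "f \<in> ell2 r s" for f
  proof -
    have "l2norm ((A \<circ> B) f) \<le> CA * l2norm (B f)"
      using CA bounded_op_in_ell2[OF B f] by simp
    also have "\<dots> \<le> CA * (CB * l2norm f)"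
      using \<open>CA \<ge> 0\<close> CB[OF f] by (rule mult_left_mono[rotated])
    finally show ?thesis
      by (simp add: algebra_simps)
  qed
  then show "\<exists>C. \<forall>f\<in>ell2 r s. l2norm ((A \<circ> B) f) \<le> C * l2norm f"
    by blast
next
  fix f assume "f \<notin> ell2 r s"
  then show "(A \<circ> B) f = (\<lambda>_. 0)"
    using A B by (simp add: bounded_op_outside bounded_op_zero)
qed

lemma op_diff_eq: "op_diff A B = op_add A (op_smult (-1) B)"
  by (simp add: op_diff_def op_add_def op_smult_def fun_eq_iff)

lemma bounded_op_diff:
  "bounded_op r s A \<Longrightarrow> bounded_op r s B \<Longrightarrow> bounded_op r s (op_diff A B)"
  unfolding op_diff_eq by (intro bounded_op_add bounded_op_smult)

lemma alg_gen_bounded: "S \<in> alg_gen r s \<Longrightarrow> bounded_op r s S"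
  by (induction rule: alg_gen.induct)
     (simp_all add: bounded_op_Lop bounded_op_Pop bounded_op_add bounded_op_smult
       bounded_op_comp[unfolded comp_def])

lemma l2norm_le_opnorm:
  assumes U: "bounded_op r s U" and f: "f \<in> ell2 r s" "l2norm f \<le> 1"
  shows "l2norm (U f) \<le> opnorm r s U"
  unfolding opnorm_def
proof (rule cSup_upper)
  show "l2norm (U f) \<in> {l2norm (U f) |f. f \<in> ell2 r s \<and> l2norm f \<le> 1}"
    using f by blast
  obtain C where C: "C \<ge> 0" "\<And>f. f \<in> ell2 r s \<Longrightarrow> l2norm (U f) \<le> C * l2norm f"
    using bounded_op_nonneg_bound[OF U] by blast
  show "bdd_above {l2norm (U f) |f. f \<in> ell2 r s \<and> l2norm f \<le> 1}"
  proof (rule bdd_aboveI[of _ C], clarify)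
    fix g assume g: "g \<in> ell2 r s" "l2norm g \<le> 1"
    have "l2norm (U g) \<le> C * l2norm g"
      using C g by auto
    also have "\<dots> \<le> C"
      using C g by (simp add: mult_left_le)
    finally show "l2norm (U g) \<le> C" .
  qed
qed

lemma opnorm_nonneg: "bounded_op r s U \<Longrightarrow> 0 \<le> opnorm r s U"
  using l2norm_le_opnorm[of r s U "\<lambda>_. 0"] by (simp add: bounded_op_zero)

lemma opnorm_zero: "opnorm r s (\<lambda>f w. 0) = 0"
proof -
  have "{l2norm ((\<lambda>f w. 0) f) | f. f \<in> ell2 r s \<and> l2norm f \<le> 1} = {0::real}"
    by (auto intro!: exI[of _ "\<lambda>_. 0"])
  then show ?thesis
    unfolding opnorm_def by simp
qed

lemma l2norm_apply_le_opnorm: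
  assumes U: "bounded_op r s U" and f: "f \<in> ell2 r s"
  shows "l2norm (U f) \<le> opnorm r s U * l2norm f"
proof (cases "l2norm f = 0")
  case True
  then show ?thesis
    using f U by (simp add: l2norm_eq_0_iff bounded_op_zero)
next
  case False
  then have n: "l2norm f > 0"
    using l2norm_nonneg[of f] by simp
  define c where "c = complex_of_real (1 / l2norm f)"
  have c: "cmod c = 1 / l2norm f"
    using n by (simp only: c_def norm_of_real) simp
  have "cmod c * l2norm (U f) = l2norm (U (\<lambda>w. c * f w))"
    using bounded_op_linear[OF U f f, of c 0] l2norm_cmult[OF bounded_op_in_ell2[OF U f]] by simp
  also have "\<dots> \<le> opnorm r s U"
    using c n by (intro l2norm_le_opnorm[OF U] ell2_cmult[OF f]) (simp add: l2norm_cmult[OF f])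
  finally show ?thesis
    using c n by (simp add: field_simps)
qed

lemma norm_apply_le_opnorm:
  assumes "bounded_op r s U" "f \<in> ell2 r s"
  shows "cmod (U f w) \<le> opnorm r s U * l2norm f"
  using norm_le_l2norm[OF bounded_op_in_ell2[OF assms]] l2norm_apply_le_opnorm[OF assms]
  by (rule order_trans)

lemma norm_apply_xi_le_opnorm:
  assumes "bounded_op r s U" "is_path r s v"
  shows "cmod (U (xi v) w) \<le> opnorm r s U"
  using norm_apply_le_opnorm[OF assms(1) xi_in_ell2[OF assms(2)]] by simp

lemma alg_gen_in_Tplus:
  assumes S: "S \<in> alg_gen r s"
  shows "S \<in> Tplus r s"
proof -
  have "op_diff S S = (\<lambda>f w. 0)"
    by (simp add: op_diff_def fun_eq_iff)
  then show ?thesis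
    using S by (auto simp: Tplus_def alg_gen_bounded opnorm_zero intro!: bexI[of _ S])
qed

lemma Tplus_functional_eq_0:
  fixes \<Phi> :: "('v, 'e) oper \<Rightarrow> complex"
  assumes T: "T \<in> Tplus r s"
    and alg: "\<And>S. S \<in> alg_gen r s \<Longrightarrow> \<Phi> S = 0"
    and diff: "\<And>U V. \<Phi> (op_diff U V) = \<Phi> U - \<Phi> V"
    and bound: "\<And>U. bounded_op r s U \<Longrightarrow> cmod (\<Phi> U) \<le> K * opnorm r s U"
  shows "\<Phi> T = 0"
proof -
  have "cmod (\<Phi> T) \<le> 0 + \<epsilon>" if "\<epsilon> > 0" for \<epsilon>
  proof -
    have "\<epsilon> / (\<bar>K\<bar> + 1) > 0"
      using that by simp
    then obtain S where S: "S \<in> alg_gen r s"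
      and close: "opnorm r s (op_diff T S) < \<epsilon> / (\<bar>K\<bar> + 1)"
      using T by (auto simp: Tplus_def)
    have U: "bounded_op r s (op_diff T S)"
      using T S by (simp add: Tplus_def bounded_op_diff alg_gen_bounded)
    have "cmod (\<Phi> T) = cmod (\<Phi> (op_diff T S))"
      by (simp add: diff alg[OF S])
    also have "\<dots> \<le> \<bar>K\<bar> * opnorm r s (op_diff T S)"
      using bound[OF U] opnorm_nonneg[OF U] by (smt (verit) mult_right_mono)
    also have "\<dots> \<le> \<bar>K\<bar> * (\<epsilon> / (\<bar>K\<bar> + 1))"
      using close by (intro mult_left_mono) auto
    also have "\<dots> \<le> \<epsilon>"
      using that by (simp add: field_simps)
    finally show ?thesis by simp
  qed
  then have "cmod (\<Phi> T) \<le> 0"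
    by (rule field_le_epsilon)
  then show ?thesis by simp
qed

section \<open>Triangular action at an edge\<close>

definition edge_triangular :: "('e \<Rightarrow> 'v) \<Rightarrow> ('e \<Rightarrow> 'v) \<Rightarrow> 'e \<Rightarrow> ('v, 'e) oper \<Rightarrow> bool" where
  "edge_triangular r s e T \<longleftrightarrow> (\<exists>a b c. \<forall>f\<in>ell2 r s.
       T f (Vtx (s e)) = a * f (Vtx (s e))
     \<and> T f (Vtx (r e)) = c * f (Vtx (r e))
     \<and> T f (Pth [e]) = b * f (Vtx (s e)) + c * f (Pth [e]))"

lemma alg_gen_edge_triangular:
  assumes "S \<in> alg_gen r s"
  shows "edge_triangular r s e S"
  using assms
proof (induction rule: alg_gen.induct)
  case (gen_L e')
  show ?case unfolding edge_triangular_def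
    by (intro exI[of _ 0] exI[of _ "if e = e' then 1 else 0"]) (auto simp: Lop_def)
next
  case (gen_P v)
  show ?case unfolding edge_triangular_def
    by (intro exI[of _ "if s e = v then 1 else 0"] exI[of _ 0] exI[of _ "if r e = v then 1 else 0"])
       (auto simp: Pop_def)
next
  case (gen_add A B)
  then obtain a1 b1 c1 a2 b2 c2 where
    "\<forall>f\<in>ell2 r s. A f (Vtx (s e)) = a1 * f (Vtx (s e)) \<and> A f (Vtx (r e)) = c1 * f (Vtx (r e))
      \<and> A f (Pth [e]) = b1 * f (Vtx (s e)) + c1 * f (Pth [e])"
    "\<forall>f\<in>ell2 r s. B f (Vtx (s e)) = a2 * f (Vtx (s e)) \<and> B f (Vtx (r e)) = c2 * f (Vtx (r e))
      \<and> B f (Pth [e]) = b2 * f (Vtx (s e)) + c2 * f (Pth [e])"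
    unfolding edge_triangular_def by blast
  then show ?case unfolding edge_triangular_def
    by (intro exI[of _ "a1 + a2"] exI[of _ "b1 + b2"] exI[of _ "c1 + c2"])
       (auto simp: op_add_def algebra_simps)
next
  case (gen_smult A k)
  then obtain a b c where
    "\<forall>f\<in>ell2 r s. A f (Vtx (s e)) = a * f (Vtx (s e)) \<and> A f (Vtx (r e)) = c * f (Vtx (r e))
      \<and> A f (Pth [e]) = b * f (Vtx (s e)) + c * f (Pth [e])"
    unfolding edge_triangular_def by blast
  then show ?case unfolding edge_triangular_def
    by (intro exI[of _ "k * a"] exI[of _ "k * b"] exI[of _ "k * c"])
       (auto simp: op_smult_def algebra_simps)
next
  case (gen_mult A B)
  then obtain a1 b1 c1 a2 b2 c2 where
    A: "\<forall>f\<in>ell2 r s. A f (Vtx (s e)) = a1 * f (Vtx (s e)) \<and> A f (Vtx (r e)) = c1 * f (Vtx (r e))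
      \<and> A f (Pth [e]) = b1 * f (Vtx (s e)) + c1 * f (Pth [e])" and
    B: "\<forall>f\<in>ell2 r s. B f (Vtx (s e)) = a2 * f (Vtx (s e)) \<and> B f (Vtx (r e)) = c2 * f (Vtx (r e))
      \<and> B f (Pth [e]) = b2 * f (Vtx (s e)) + c2 * f (Pth [e])"
    unfolding edge_triangular_def by blast
  have "B f \<in> ell2 r s" if "f \<in> ell2 r s" for f
    using alg_gen_bounded[OF gen_mult.hyps(2)] that by (rule bounded_op_in_ell2)
  then show ?case unfolding edge_triangular_def
    using A B by (intro exI[of _ "a1 * a2"] exI[of _ "b1 * a2 + c1 * b2"] exI[of _ "c1 * c2"])
                 (auto simp: algebra_simps)
qed

lemma edge_triangular_coeffs:
  assumes T: "edge_triangular r s e T" and f: "f \<in> ell2 r s"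
  shows "T f (Vtx (s e)) = T (xi (Vtx (s e))) (Vtx (s e)) * f (Vtx (s e))"
    and "T f (Vtx (r e)) = T (xi (Vtx (r e))) (Vtx (r e)) * f (Vtx (r e))"
    and "T f (Pth [e]) = T (xi (Vtx (s e))) (Pth [e]) * f (Vtx (s e))
                         + T (xi (Vtx (r e))) (Vtx (r e)) * f (Pth [e])"
proof -
  obtain a b c where abc: "\<forall>f\<in>ell2 r s. T f (Vtx (s e)) = a * f (Vtx (s e))
      \<and> T f (Vtx (r e)) = c * f (Vtx (r e)) \<and> T f (Pth [e]) = b * f (Vtx (s e)) + c * f (Pth [e])"
    using T unfolding edge_triangular_def by blast
  have "T (xi (Vtx (s e))) (Vtx (s e)) = a" "T (xi (Vtx (s e))) (Pth [e]) = b"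
    "T (xi (Vtx (r e))) (Vtx (r e)) = c"
    using abc[rule_format, OF xi_Vtx_in_ell2] by (simp_all add: xi_def)
  then show "T f (Vtx (s e)) = T (xi (Vtx (s e))) (Vtx (s e)) * f (Vtx (s e))"
    and "T f (Vtx (r e)) = T (xi (Vtx (r e))) (Vtx (r e)) * f (Vtx (r e))"
    and "T f (Pth [e]) = T (xi (Vtx (s e))) (Pth [e]) * f (Vtx (s e))
                         + T (xi (Vtx (r e))) (Vtx (r e)) * f (Pth [e])"
    using abc f by auto
qed

lemma norm_diff_apply_xi_le:
  assumes U: "bounded_op r s U" and "is_path r s v" and a: "cmod a \<le> K * opnorm r s U"
  shows "cmod (a - U (xi v) w * z) \<le> (K + cmod z) * opnorm r s U"
proof -
  have "cmod (a - U (xi v) w * z) \<le> cmod a + cmod (U (xi v) w) * cmod z"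
    by (metis norm_mult norm_triangle_ineq4)
  also have "\<dots> \<le> K * opnorm r s U + opnorm r s U * cmod z"
    using a norm_apply_xi_le_opnorm[OF assms(1,2)] by (intro add_mono mult_right_mono) auto
  finally show ?thesis
    by (simp add: algebra_simps)
qed

lemma Tplus_edge_triangular:
  assumes T: "T \<in> Tplus r s"
  shows "edge_triangular r s e T"
proof -
  let ?x = "Vtx (s e)" and ?y = "Vtx (r e)" and ?e = "Pth [e]"
  let ?X = "xi ?x" and ?Y = "xi ?y"
  have "T f ?x = T ?X ?x * f ?x \<and> T f ?y = T ?Y ?y * f ?y
      \<and> T f ?e = T ?X ?e * f ?x + T ?Y ?y * f ?e" if f: "f \<in> ell2 r s" for f
  proof -
    note alg = edge_triangular_coeffs[OF alg_gen_edge_triangular f]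
    have apply_f: "cmod (U f w) \<le> l2norm f * opnorm r s U" if "bounded_op r s U" for U w
      using norm_apply_le_opnorm[OF that f] by (simp add: mult.commute)
    have "T f ?x - T ?X ?x * f ?x = 0"
      by (rule Tplus_functional_eq_0[OF T, where \<Phi> = "\<lambda>U. U f ?x - U ?X ?x * f ?x"
            and K = "l2norm f + cmod (f ?x)"])
         (simp_all add: alg op_diff_def left_diff_distrib norm_diff_apply_xi_le apply_f)
    moreover have "T f ?y - T ?Y ?y * f ?y = 0"
      by (rule Tplus_functional_eq_0[OF T, where \<Phi> = "\<lambda>U. U f ?y - U ?Y ?y * f ?y"
            and K = "l2norm f + cmod (f ?y)"])
         (simp_all add: alg op_diff_def left_diff_distrib norm_diff_apply_xi_le apply_f)
    moreover have "T f ?e - T ?X ?e * f ?x - T ?Y ?y * f ?e = 0"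
      by (rule Tplus_functional_eq_0[OF T, where \<Phi> = "\<lambda>U. U f ?e - U ?X ?e * f ?x - U ?Y ?y * f ?e"
            and K = "l2norm f + cmod (f ?x) + cmod (f ?e)"])
         (simp_all add: alg op_diff_def left_diff_distrib norm_diff_apply_xi_le apply_f)
    ultimately show ?thesis
      by (simp add: algebra_simps)
  qed
  then show ?thesis
    unfolding edge_triangular_def by blast
qed

section \<open>The nest representation at an edge\<close>

text \<open>The compression of T to span {\<xi>_x, \<xi>_e} in the basis h1 = \<xi>_x, h2 = \<xi>_e, where x = s(e),
  y = r(e). By triangularity the entry \<langle>T \<xi>_e, \<xi>_e\<rangle> equals (T \<xi>_y)(y).\<close>

definition edge_rep :: "('e \<Rightarrow> 'v) \<Rightarrow> ('e \<Rightarrow> 'v) \<Rightarrow> 'e \<Rightarrow> ('v, 'e) oper \<Rightarrow> complex^2^2" where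
  "edge_rep r s e T = (\<chi> i j.
     if i = 1 \<and> j = 1 then T (xi (Vtx (s e))) (Vtx (s e))
     else if i = 2 \<and> j = 1 then T (xi (Vtx (s e))) (Pth [e])
     else if i = 2 \<and> j = 2 then T (xi (Vtx (r e))) (Vtx (r e))
     else 0)"

lemma edge_rep_nth [simp]:
  "edge_rep r s e T $ 1 $ 1 = T (xi (Vtx (s e))) (Vtx (s e))"
  "edge_rep r s e T $ 1 $ 2 = 0"
  "edge_rep r s e T $ 2 $ 1 = T (xi (Vtx (s e))) (Pth [e])"
  "edge_rep r s e T $ 2 $ 2 = T (xi (Vtx (r e))) (Vtx (r e))"
  by (simp_all add: edge_rep_def)

lemma mat2_eq_iff:
  "(M :: 'a^2^2) = N \<longleftrightarrow> M$1$1 = N$1$1 \<and> M$1$2 = N$1$2 \<and> M$2$1 = N$2$1 \<and> M$2$2 = N$2$2"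
  by (auto simp: vec_eq_iff forall_2)

lemma matrix_mult_2_nth [simp]:
  "((M :: 'a::semiring_1^2^2) ** N) $ i $ j = M$i$1 * N$1$j + M$i$2 * N$2$j"
  by (simp add: matrix_matrix_mult_def sum_2)

lemma norm_mat2_le:
  fixes M :: "'a::real_normed_vector^2^2"
  shows "norm M \<le> norm (M$1$1) + norm (M$1$2) + norm (M$2$1) + norm (M$2$2)"
proof -
  have l1: "norm v \<le> norm (v$1) + norm (v$2)" for v :: "'b::real_normed_vector^2"
    using L2_set_le_sum[of UNIV "\<lambda>i. norm (v$i)"] by (simp add: norm_vec_def sum_2)
  show ?thesis
    using l1[of M] l1[of "M$1"] l1[of "M$2"] by simp
qed

lemma edge_rep_mult:
  assumes "A \<in> Tplus r s" "B \<in> Tplus r s"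
  shows "edge_rep r s e (A \<circ> B) = edge_rep r s e A ** edge_rep r s e B"
proof -
  have "B (xi (Vtx v)) \<in> ell2 r s" for v
    using assms(2) by (simp add: Tplus_def bounded_op_in_ell2)
  note A_coeffs = edge_triangular_coeffs[OF Tplus_edge_triangular[OF assms(1)] this]
  show ?thesis
    unfolding mat2_eq_iff by (simp add: A_coeffs[of "s e"] A_coeffs[of "r e"])
qed

lemma norm_edge_rep_le:
  assumes "bounded_op r s U"
  shows "norm (edge_rep r s e U) \<le> 3 * opnorm r s U"
proof -
  have "norm (edge_rep r s e U)
      \<le> cmod (U (xi (Vtx (s e))) (Vtx (s e))) + cmod (U (xi (Vtx (s e))) (Pth [e]))
        + cmod (U (xi (Vtx (r e))) (Vtx (r e)))"
    using norm_mat2_le[of "edge_rep r s e U"] by simp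
  also have "\<dots> \<le> 3 * opnorm r s U"
    using norm_apply_xi_le_opnorm[OF assms is_path_Vtx, of "s e" "Vtx (s e)"]
      norm_apply_xi_le_opnorm[OF assms is_path_Vtx, of "s e" "Pth [e]"]
      norm_apply_xi_le_opnorm[OF assms is_path_Vtx, of "r e" "Vtx (r e)"]
    by linarith
  finally show ?thesis .
qed

lemma edge_rep_image:
  assumes "s e \<noteq> r e"
  shows "edge_rep r s e ` Tplus r s = {M. M $ 1 $ 2 = 0}"
proof
  show "edge_rep r s e ` Tplus r s \<subseteq> {M. M $ 1 $ 2 = 0}"
    by auto
  show "{M. M $ 1 $ 2 = 0} \<subseteq> edge_rep r s e ` Tplus r s"
  proof
    fix M :: "complex^2^2"
    assume "M \<in> {M. M $ 1 $ 2 = 0}"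
    then have M12: "M $ 1 $ 2 = 0"
      by simp
    define T where "T = op_add (op_smult (M$1$1) (Pop r s (s e)))
        (op_add (op_smult (M$2$1) (Lop r s e)) (op_smult (M$2$2) (Pop r s (r e))))"
    have "T \<in> Tplus r s"
      unfolding T_def by (intro alg_gen_in_Tplus alg_gen.intros)
    moreover have "edge_rep r s e T = M"
      using assms M12 xi_Vtx_in_ell2[of "s e" r s] xi_Vtx_in_ell2[of "r e" r s]
      unfolding mat2_eq_iff
      by (simp add: T_def op_add_def op_smult_def Pop_def Lop_def xi_def)
    ultimately show "M \<in> edge_rep r s e ` Tplus r s"
      by blast
  qed
qed

lemma edge_rep_op_add: "edge_rep r s e (op_add A B) = edge_rep r s e A + edge_rep r s e B"
  by (simp add: mat2_eq_iff op_add_def)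

lemma edge_rep_op_diff: "edge_rep r s e (op_diff A B) = edge_rep r s e A - edge_rep r s e B"
  by (simp add: mat2_eq_iff op_diff_def)

lemma edge_rep_op_smult: "edge_rep r s e (op_smult c A) = (\<chi> i j. c * edge_rep r s e A $ i $ j)"
  by (simp add: mat2_eq_iff op_smult_def)

lemma edge_rep_continuous:
  assumes A: "A \<in> Tplus r s" and "\<epsilon> > 0"
  shows "\<exists>\<delta>>0. \<forall>B\<in>Tplus r s.
           opnorm r s (op_diff B A) < \<delta> \<longrightarrow> norm (edge_rep r s e B - edge_rep r s e A) < \<epsilon>"
proof (intro exI[of _ "\<epsilon> / 3"] conjI ballI impI)
  fix B assume B: "B \<in> Tplus r s" and close: "opnorm r s (op_diff B A) < \<epsilon> / 3"
  have "bounded_op r s (op_diff B A)"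
    using A B by (simp add: Tplus_def bounded_op_diff)
  then have "norm (edge_rep r s e (op_diff B A)) \<le> 3 * opnorm r s (op_diff B A)"
    by (rule norm_edge_rep_le)
  then show "norm (edge_rep r s e B - edge_rep r s e A) < \<epsilon>"
    using close by (simp add: edge_rep_op_diff)
qed (use \<open>\<epsilon> > 0\<close> in simp)

lemma nest_rep_edge_rep:
  assumes "s e \<noteq> r e"
  shows "nest_rep r s (edge_rep r s e)"
  unfolding nest_rep_def
proof (intro conjI ballI allI impI)
  fix A B assume "A \<in> Tplus r s" "B \<in> Tplus r s"
  then show "edge_rep r s e (A \<circ> B) = edge_rep r s e A ** edge_rep r s e B"
    by (rule edge_rep_mult)
next
  fix A and \<epsilon> :: real assume "A \<in> Tplus r s" "\<epsilon> > 0"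
  then show "\<exists>\<delta>>0. \<forall>B\<in>Tplus r s.
      opnorm r s (op_diff B A) < \<delta> \<longrightarrow> norm (edge_rep r s e B - edge_rep r s e A) < \<epsilon>"
    by (rule edge_rep_continuous)
next
  show "edge_rep r s e ` Tplus r s = {M. M $ 1 $ 2 = 0}"
    using assms by (rule edge_rep_image)
qed (rule edge_rep_op_add, rule edge_rep_op_smult)

lemma nest_rep_diag_character:
  fixes i :: 2
  assumes \<pi>: "nest_rep r s \<pi>"
  shows "character r s (\<lambda>A. \<pi> A $ i $ i)"
  unfolding character_def
proof (intro conjI ballI allI)
  have upper: "\<pi> A $ 1 $ 2 = 0" if "A \<in> Tplus r s" for A
    using \<pi> that unfolding nest_rep_def by blast
  fix A B assume A: "A \<in> Tplus r s" and B: "B \<in> Tplus r s"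
  show "\<pi> (op_add A B) $ i $ i = \<pi> A $ i $ i + \<pi> B $ i $ i"
    using \<pi> A B unfolding nest_rep_def by simp
  have "\<pi> (A \<circ> B) = \<pi> A ** \<pi> B"
    using \<pi> A B unfolding nest_rep_def by blast
  then show "\<pi> (A \<circ> B) $ i $ i = \<pi> A $ i $ i * \<pi> B $ i $ i"
    using exhaust_2[of i] upper[OF A] upper[OF B] by auto
next
  fix A c assume "A \<in> Tplus r s"
  then show "\<pi> (op_smult c A) $ i $ i = c * \<pi> A $ i $ i"
    using \<pi> unfolding nest_rep_def by simp
next
  have "(\<chi> k l. if k = l then 1 else 0) \<in> \<pi> ` Tplus r s"
    using \<pi> unfolding nest_rep_def by simp
  then obtain I where I: "(\<chi> k l. if k = l then 1 else 0) = \<pi> I" "I \<in> Tplus r s"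
    by (rule imageE)
  have "\<pi> I $ i $ i = 1"
    using I(1)[symmetric] by simp
  then show "\<exists>A\<in>Tplus r s. \<pi> A $ i $ i \<noteq> 0"
    using I(2) by (intro bexI[of _ I]) simp_all
qed

lemma Pop_xi_Vtx [simp]: "Pop r s v (xi (Vtx v)) (Vtx v) = 1"
proof -
  have "xi (Vtx v) \<in> ell2 r s"
    by simp
  then show ?thesis
    by (simp add: Pop_def xi_def)
qed

lemma edge_rep_in_rep_xy:
  assumes "s e \<noteq> r e"
  shows "edge_rep r s e \<in> rep_xy r s (s e) (r e)"
proof -
  have nest: "nest_rep r s (edge_rep r s e)"
    using assms by (rule nest_rep_edge_rep)
  have "(\<lambda>A. edge_rep r s e A $ 1 $ 1) \<in> MG r s (s e)"
    and "(\<lambda>A. edge_rep r s e A $ 2 $ 2) \<in> MG r s (r e)"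
    using nest_rep_diag_character[OF nest, of 1] nest_rep_diag_character[OF nest, of 2]
    by (simp_all add: MG_def)
  then show ?thesis
    using nest unfolding rep_xy_def by blast
qed

lemma fcoef_eq: "fcoef r s A w = A (xi (Vtx (src s w))) w"
proof -
  have "fcoef r s A w = infsum (\<lambda>u. A (xi (Vtx (src s w))) u * cnj (xi w u)) {w}"
    unfolding fcoef_def l2inner_def by (intro infsum_cong_neutral) (auto simp: xi_def)
  then show ?thesis
    by (simp add: xi_def)
qed

theorem lemma2p9:
  fixes r s :: "'e::countable \<Rightarrow> 'v::countable"
    and x y :: 'v and es :: "'e list" and A :: "('v, 'e) oper"
  assumes "x \<noteq> y"
    and "distinct es"
    and "\<forall>e\<in>set es. s e = x \<and> r e = y"
    and "A \<in> Kxy r s x y"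
    and "A = Pop r s y \<circ> A \<circ> Pop r s x"
  shows "\<forall>e\<in>set es. fcoef r s A (Pth [e]) = 0"
proof
  fix e assume "e \<in> set es"
  then have x: "s e = x" and y: "r e = y"
    using assms(3) by auto
  have "edge_rep r s e \<in> rep_xy r s x y"
    using edge_rep_in_rep_xy[of s e r] assms(1) x y by simp
  then have "edge_rep r s e A = 0"
    using assms(4) by (simp add: Kxy_def)
  then have "A (xi (Vtx (s e))) (Pth [e]) = 0"
    by (metis edge_rep_nth(3) zero_index)
  then show "fcoef r s A (Pth [e]) = 0"
    by (simp add: fcoef_eq)
qed

end
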